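(* Let $K\ge 2$, $M,N,d$ be positive integers with $d\le \min(M,N)$, and consider the symmetric system $(M\times N,d)^K$ (i.e. $M^{[k]}=M$, $N^{[k]}=N$, $d^{[k]}=d$ for all $k\in\{1,\dots,K\}$). Then this system is proper if and only if $N_v\ge N_e$, and this holds if and only if $M+N-(K+1)d\ge 0$.
   Context: A $K$-user MIMO interference system $\Pi_{k=1}^K(M^{[k]}\times N^{[k]},d^{[k]})$ is specified by positive integers $M^{[k]}$ (transmit antennas of user $k$), $N^{[k]}$ (receive antennas of user $k$) and $d^{[k]}\le\min(M^{[k]},N^{[k]})$ (number of beams of user $k$), $k\in\mathcal{K}=\{1,\dots,K\}$. Its variables are: for each $j\in\mathcal K$ and $n\in\{1,\dots,d^{[j]}\}$ a set $T_{j,n}$ of $M^{[j]}-d^{[j]}$ variables (the free entries of the $n$-th transmit beam of user $j$, normalized so its top $d^{[j]}\times d^{[j]}$ block of the precoder is the identity), and for each $k\in\mathcal K$ and $m\in\{1,\dots,d^{[k]}\}$ a set $R_{k,m}$ of $N^{[k]}-d^{[k]}$ variables (the free entries of the $m$-th receive beam of user $k$); all these sets are pairwise disjoint. The equations are $E^{kj}_{mn}$ (standing for $\mathbf u^{[k]\dagger}_m \mathbf H^{[kj]}\mathbf v^{[j]}_n=0$) for $j,k\in\mathcal K$, $k\ne j$, $m\in\{1,\dots,d^{[k]}\}$, $n\in\{1,\dots,d^{[j]}\}$; let $\mathcal E$ be the set of all of them and set $\mathrm{var}(E^{kj}_{mn})=T_{j,n}\cup R_{k,m}$, so $|\mathrm{var}(E^{kj}_{mn})|=(M^{[j]}-d^{[j]})+(N^{[k]}-d^{[k]})$.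 The system is called proper if for every subset $S\subseteq\mathcal E$, $|S|\le\left|\bigcup_{E\in S}\mathrm{var}(E)\right|$, and improper otherwise. The total numbers of equations and variables are $N_e=\sum_{k,j\in\mathcal K,\,k\ne j} d^{[k]}d^{[j]}$ and $N_v=\sum_{k=1}^K d^{[k]}(M^{[k]}+N^{[k]}-2d^{[k]})$. *)

theory Defs
  imports Main
begin

text \<open>A K-user MIMO interference system is given by K and functions
  Mt (transmit antennas), Nr (receive antennas), d (beams) on users 1..K.
  Variables are encoded as tuples (b, user, beam, i): b = False for transmit
  variables T_{j,n} (i < Mt j - d j), b = True for receive variables R_{k,m}
  (i < Nr k - d k).  Equations E^{kj}_{mn} are encoded as tuples (k, j, m, n).\<close>

definition Tvars :: "(nat \<Rightarrow> nat) \<Rightarrow> (nat \<Rightarrow> nat) \<Rightarrow> nat \<Rightarrow> nat \<Rightarrow> (bool \<times> nat \<times> nat \<times> nat) set" where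
  "Tvars Mt d j n = {(False, j, n, i) | i. i < Mt j - d j}"

definition Rvars :: "(nat \<Rightarrow> nat) \<Rightarrow> (nat \<Rightarrow> nat) \<Rightarrow> nat \<Rightarrow> nat \<Rightarrow> (bool \<times> nat \<times> nat \<times> nat) set" where
  "Rvars Nr d k m = {(True, k, m, i) | i. i < Nr k - d k}"

definition eqs :: "nat \<Rightarrow> (nat \<Rightarrow> nat) \<Rightarrow> (nat \<times> nat \<times> nat \<times> nat) set" where
  "eqs K d = {(k, j, m, n). k \<in> {1..K} \<and> j \<in> {1..K} \<and> k \<noteq> j \<and> m \<in> {1..d k} \<and> n \<in> {1..d j}}"

definition var_of :: "(nat \<Rightarrow> nat) \<Rightarrow> (nat \<Rightarrow> nat) \<Rightarrow> (nat \<Rightarrow> nat) \<Rightarrow> nat \<times> nat \<times> nat \<times> nat \<Rightarrow> (bool \<times> nat \<times> nat \<times> nat) set" where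
  "var_of Mt Nr d E = (case E of (k, j, m, n) \<Rightarrow> Tvars Mt d j n \<union> Rvars Nr d k m)"

definition proper :: "nat \<Rightarrow> (nat \<Rightarrow> nat) \<Rightarrow> (nat \<Rightarrow> nat) \<Rightarrow> (nat \<Rightarrow> nat) \<Rightarrow> bool" where
  "proper K Mt Nr d \<longleftrightarrow>
     (\<forall>S \<subseteq> eqs K d. card S \<le> card (\<Union>E\<in>S. var_of Mt Nr d E))"

definition num_eqs :: "nat \<Rightarrow> (nat \<Rightarrow> nat) \<Rightarrow> nat" where
  "num_eqs K d = (\<Sum>k\<in>{1..K}. \<Sum>j\<in>{1..K} - {k}. d k * d j)"

definition num_vars :: "nat \<Rightarrow> (nat \<Rightarrow> nat) \<Rightarrow> (nat \<Rightarrow> nat) \<Rightarrow> (nat \<Rightarrow> nat) \<Rightarrow> int" where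
  "num_vars K Mt Nr d = (\<Sum>k\<in>{1..K}. int (d k) * (int (Mt k) + int (Nr k) - 2 * int (d k)))"

end

theory Submission
  imports Defs
begin

text \<open>Necessity holds for every system: properness applied to the set of all equations gives
  \<open>N\<^sub>e \<le>\<close> (number of variables occurring) \<open>\<le> N\<^sub>v\<close>.
  For sufficiency in the symmetric case, a set \<open>S\<close> of equations touching \<open>t\<close> transmit beams
  and \<open>r\<close> receive beams involves exactly \<open>t(M - d) + r(N - d)\<close> variables, while every beam
  lies in at most \<open>(K - 1)d\<close> equations; hence \<open>|S| \<le> (K - 1)d min(t, r)\<close>, which is at most
  \<open>t(M - d) + r(N - d)\<close> as soon as \<open>(K - 1)d \<le> (M - d) + (N - d)\<close>.  After cancelling \<open>Kd\<close>,
  \<open>N\<^sub>v \<ge> N\<^sub>e\<close> is the same inequality.\<close>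

lemma eqs_eq_Sigma:
  "eqs K d = (\<lambda>((k, j), (m, n)). (k, j, m, n)) `
     (SIGMA (k, j) : (SIGMA k : {1..K}. {1..K} - {k}). {1..d k} \<times> {1..d j})"
  unfolding eqs_def by (auto simp: image_iff)

lemma finite_eqs: "finite (eqs K d)"
  unfolding eqs_eq_Sigma by (intro finite_imageI finite_SigmaI) (auto split: prod.splits)

lemma card_eqs: "card (eqs K d) = num_eqs K d"
proof -
  have "card (eqs K d) = card (SIGMA (k, j) : (SIGMA k : {1..K}. {1..K} - {k}). {1..d k} \<times> {1..d j})"
    unfolding eqs_eq_Sigma by (rule card_image) (auto simp: inj_on_def)
  also have "\<dots> = (\<Sum>(k, j) \<in> (SIGMA k : {1..K}. {1..K} - {k}). d k * d j)"
    by (subst card_SigmaI) (auto simp: card_cartesian_product split: prod.splits intro!: sum.cong)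
  also have "\<dots> = num_eqs K d"
    unfolding num_eqs_def by (subst sum.Sigma) auto
  finally show ?thesis .
qed

lemma Tvars_eq_image: "Tvars Mt d j n = (\<lambda>i. (False, j, n, i)) ` {..<Mt j - d j}"
  by (auto simp: Tvars_def)

lemma Rvars_eq_image: "Rvars Nr d k m = (\<lambda>i. (True, k, m, i)) ` {..<Nr k - d k}"
  by (auto simp: Rvars_def)

lemma finite_Tvars: "finite (Tvars Mt d j n)"
  by (simp add: Tvars_eq_image)

lemma finite_Rvars: "finite (Rvars Nr d k m)"
  by (simp add: Rvars_eq_image)

lemma card_Tvars: "card (Tvars Mt d j n) = Mt j - d j"
  by (simp add: Tvars_eq_image card_image inj_on_def)

lemma card_Rvars: "card (Rvars Nr d k m) = Nr k - d k"
  by (simp add: Rvars_eq_image card_image inj_on_def)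

definition tx_beam :: "nat \<times> nat \<times> nat \<times> nat \<Rightarrow> nat \<times> nat" where
  "tx_beam = (\<lambda>(k, j, m, n). (j, n))"

definition rx_beam :: "nat \<times> nat \<times> nat \<times> nat \<Rightarrow> nat \<times> nat" where
  "rx_beam = (\<lambda>(k, j, m, n). (k, m))"

lemma Union_var_of:
  "(\<Union>E\<in>S. var_of Mt Nr d E) =
     (\<Union>(j, n) \<in> tx_beam ` S. Tvars Mt d j n) \<union> (\<Union>(k, m) \<in> rx_beam ` S. Rvars Nr d k m)"
  by (fastforce simp: var_of_def tx_beam_def rx_beam_def)

lemma card_UN_Tvars:
  "finite P \<Longrightarrow> card (\<Union>(j, n) \<in> P. Tvars Mt d j n) = (\<Sum>(j, n) \<in> P. Mt j - d j)"
  by (subst card_UN_disjoint) (auto simp: finite_Tvars card_Tvars split_def, auto simp: Tvars_def)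

lemma card_UN_Rvars:
  "finite P \<Longrightarrow> card (\<Union>(k, m) \<in> P. Rvars Nr d k m) = (\<Sum>(k, m) \<in> P. Nr k - d k)"
  by (subst card_UN_disjoint) (auto simp: finite_Rvars card_Rvars split_def, auto simp: Rvars_def)

lemma card_Union_var_of:
  assumes "finite S"
  shows "card (\<Union>E\<in>S. var_of Mt Nr d E) =
           (\<Sum>(j, n) \<in> tx_beam ` S. Mt j - d j) + (\<Sum>(k, m) \<in> rx_beam ` S. Nr k - d k)"
proof -
  let ?T = "\<Union>(j, n) \<in> tx_beam ` S. Tvars Mt d j n"
  let ?R = "\<Union>(k, m) \<in> rx_beam ` S. Rvars Nr d k m"
  have "card (?T \<union> ?R) = card ?T + card ?R"
    by (rule card_Un_disjoint)
      (use assms in \<open>auto simp: finite_Tvars finite_Rvars Tvars_def Rvars_def split: prod.splits\<close>)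
  with assms show ?thesis
    unfolding Union_var_of by (simp only: card_UN_Tvars card_UN_Rvars finite_imageI)
qed

lemma tx_beam_eqs_subset: "tx_beam ` eqs K d \<subseteq> (SIGMA j : {1..K}. {1..d j})"
  by (auto simp: tx_beam_def eqs_def)

lemma rx_beam_eqs_subset: "rx_beam ` eqs K d \<subseteq> (SIGMA k : {1..K}. {1..d k})"
  by (auto simp: rx_beam_def eqs_def)

lemma card_Union_var_of_eqs_le_num_vars:
  assumes "\<forall>k\<in>{1..K}. d k \<le> Mt k \<and> d k \<le> Nr k"
  shows "int (card (\<Union>E\<in>eqs K d. var_of Mt Nr d E)) \<le> num_vars K Mt Nr d"
proof -
  have "card (\<Union>E\<in>eqs K d. var_of Mt Nr d E)
      \<le> (\<Sum>(j, n) \<in> (SIGMA j : {1..K}. {1..d j}). Mt j - d j)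
        + (\<Sum>(k, m) \<in> (SIGMA k : {1..K}. {1..d k}). Nr k - d k)"
    unfolding card_Union_var_of[OF finite_eqs]
    using tx_beam_eqs_subset rx_beam_eqs_subset by (intro add_mono sum_mono2) auto
  also have "\<dots> = (\<Sum>k\<in>{1..K}. d k * ((Mt k - d k) + (Nr k - d k)))"
    by (simp add: sum.Sigma[symmetric] sum.distrib distrib_left)
  finally have "int (card (\<Union>E\<in>eqs K d. var_of Mt Nr d E))
      \<le> int (\<Sum>k\<in>{1..K}. d k * ((Mt k - d k) + (Nr k - d k)))"
    by (simp only: of_nat_le_iff)
  also have "\<dots> = num_vars K Mt Nr d"
    unfolding num_vars_def of_nat_sum
  proof (rule sum.cong)
    fix k assume "k \<in> {1..K}"
    then have "d k \<le> Mt k" "d k \<le> Nr k"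
      using assms by auto
    then show "int (d k * ((Mt k - d k) + (Nr k - d k))) = int (d k) * (int (Mt k) + int (Nr k) - 2 * int (d k))"
      by (simp only: of_nat_mult of_nat_add of_nat_diff) (simp add: algebra_simps)
  qed simp
  finally show ?thesis .
qed

lemma num_eqs_le_num_vars_if_proper:
  assumes "proper K Mt Nr d" and "\<forall>k\<in>{1..K}. d k \<le> Mt k \<and> d k \<le> Nr k"
  shows "int (num_eqs K d) \<le> num_vars K Mt Nr d"
proof -
  have "num_eqs K d \<le> card (\<Union>E\<in>eqs K d. var_of Mt Nr d E)"
    using assms(1) unfolding proper_def card_eqs[symmetric] by blast
  then show ?thesis
    using card_Union_var_of_eqs_le_num_vars[OF assms(2)] by linarith
qed

lemma card_le_mult_card_image:
  assumes "finite S" and "\<And>y. y \<in> f ` S \<Longrightarrow> card {x \<in> S. f x = y} \<le> c"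
  shows "card S \<le> c * card (f ` S)"
proof -
  have "card S = card (\<Union>y\<in>f ` S. {x \<in> S. f x = y})"
    by (rule arg_cong[where f = card]) blast
  also have "\<dots> \<le> (\<Sum>y\<in>f ` S. card {x \<in> S. f x = y})"
    by (rule card_UN_le) (use assms(1) in simp)
  also have "\<dots> \<le> c * card (f ` S)"
    using sum_bounded_above[of "f ` S" "\<lambda>y. card {x \<in> S. f x = y}" c] assms(2)
    by (simp add: mult.commute)
  finally show ?thesis .
qed

lemma card_tx_beam_fiber:
  assumes "S \<subseteq> eqs K (\<lambda>_. d)" and "p \<in> tx_beam ` S"
  shows "card {E \<in> S. tx_beam E = p} \<le> (K - 1) * d"
proof -
  obtain j n where p: "p = (j, n)" and j: "j \<in> {1..K}"
    using assms by (auto simp: tx_beam_def eqs_def)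
  have "{E \<in> S. tx_beam E = p} \<subseteq> (\<lambda>(k, m). (k, j, m, n)) ` (({1..K} - {j}) \<times> {1..d})"
    using assms(1) by (force simp: p tx_beam_def eqs_def image_iff)
  then have "card {E \<in> S. tx_beam E = p} \<le> card (({1..K} - {j}) \<times> {1..d})"
    by (meson card_image_le card_mono finite_SigmaI finite_Diff finite_atLeastAtMost finite_imageI order_trans)
  also have "\<dots> = (K - 1) * d"
    using j by (simp add: card_cartesian_product)
  finally show ?thesis .
qed

lemma card_rx_beam_fiber:
  assumes "S \<subseteq> eqs K (\<lambda>_. d)" and "p \<in> rx_beam ` S"
  shows "card {E \<in> S. rx_beam E = p} \<le> (K - 1) * d"
proof -
  obtain k m where p: "p = (k, m)" and k: "k \<in> {1..K}"
    using assms by (auto simp: rx_beam_def eqs_def)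
  have "{E \<in> S. rx_beam E = p} \<subseteq> (\<lambda>(j, n). (k, j, m, n)) ` (({1..K} - {k}) \<times> {1..d})"
    using assms(1) by (force simp: p rx_beam_def eqs_def image_iff)
  then have "card {E \<in> S. rx_beam E = p} \<le> card (({1..K} - {k}) \<times> {1..d})"
    by (meson card_image_le card_mono finite_SigmaI finite_Diff finite_atLeastAtMost finite_imageI order_trans)
  also have "\<dots> = (K - 1) * d"
    using k by (simp add: card_cartesian_product)
  finally show ?thesis .
qed

lemma proper_symmetric_if:
  assumes "(K - 1) * d \<le> (M - d) + (N - d)"
  shows "proper K (\<lambda>_. M) (\<lambda>_. N) (\<lambda>_. d)"
  unfolding proper_def
proof (intro allI impI)
  fix S assume S: "S \<subseteq> eqs K (\<lambda>_. d)"
  then have fin: "finite S"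
    using finite_eqs finite_subset by blast
  define t where "t = card (tx_beam ` S)"
  define r where "r = card (rx_beam ` S)"
  have "card S \<le> (K - 1) * d * min t r"
    using card_le_mult_card_image[OF fin card_tx_beam_fiber[OF S]]
      card_le_mult_card_image[OF fin card_rx_beam_fiber[OF S]]
    unfolding t_def r_def by (simp add: min_def)
  also have "\<dots> \<le> ((M - d) + (N - d)) * min t r"
    using assms by (rule mult_right_mono) simp
  also have "\<dots> \<le> t * (M - d) + r * (N - d)"
    by (simp add: distrib_right add_mono mult_le_mono)
  also have "\<dots> = card (\<Union>E\<in>S. var_of (\<lambda>_. M) (\<lambda>_. N) (\<lambda>_. d) E)"
    using card_Union_var_of[OF fin] unfolding t_def r_def by (simp add: split_def)
  finally show "card S \<le> card (\<Union>E\<in>S. var_of (\<lambda>_. M) (\<lambda>_. N) (\<lambda>_. d) E)" .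
qed

lemma num_eqs_symmetric: "num_eqs K (\<lambda>_. d) = K * (K - 1) * d * d"
  by (simp add: num_eqs_def)

lemma num_vars_symmetric:
  "num_vars K (\<lambda>_. M) (\<lambda>_. N) (\<lambda>_. d) = int K * int d * (int M + int N - 2 * int d)"
  by (simp add: num_vars_def)

lemma num_eqs_le_num_vars_symmetric_iff:
  assumes "0 < K" and "0 < d"
  shows "int (num_eqs K (\<lambda>_. d)) \<le> num_vars K (\<lambda>_. M) (\<lambda>_. N) (\<lambda>_. d)
           \<longleftrightarrow> 0 \<le> int M + int N - (int K + 1) * int d"
proof -
  have pos: "0 < int K * int d"
    using assms by simp
  have "int (num_eqs K (\<lambda>_. d)) \<le> num_vars K (\<lambda>_. M) (\<lambda>_. N) (\<lambda>_. d)
      \<longleftrightarrow> int K * int d * ((int K - 1) * int d) \<le> int K * int d * (int M + int N - 2 * int d)"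
    using assms(1) by (simp add: num_eqs_symmetric num_vars_symmetric of_nat_diff mult_ac)
  also have "\<dots> \<longleftrightarrow> (int K - 1) * int d \<le> int M + int N - 2 * int d"
    using pos by (rule mult_le_cancel_left_pos)
  also have "\<dots> \<longleftrightarrow> 0 \<le> int M + int N - (int K + 1) * int d"
    by (simp add: algebra_simps)
  finally show ?thesis .
qed

theorem theorem1:
  fixes K M N d :: nat
  assumes "K \<ge> 2" and "M > 0" and "N > 0" and "d > 0"
    and "d \<le> min M N"
  shows "(proper K (\<lambda>_. M) (\<lambda>_. N) (\<lambda>_. d) \<longleftrightarrow>
            num_vars K (\<lambda>_. M) (\<lambda>_. N) (\<lambda>_. d) \<ge> int (num_eqs K (\<lambda>_. d)))
       \<and> (num_vars K (\<lambda>_. M) (\<lambda>_. N) (\<lambda>_. d) \<ge> int (num_eqs K (\<lambda>_. d)) \<longleftrightarrow>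
            int M + int N - (int K + 1) * int d \<ge> 0)"
proof -
  have counts_iff: "num_vars K (\<lambda>_. M) (\<lambda>_. N) (\<lambda>_. d) \<ge> int (num_eqs K (\<lambda>_. d))
      \<longleftrightarrow> int M + int N - (int K + 1) * int d \<ge> 0"
    using assms(1,4) by (simp add: num_eqs_le_num_vars_symmetric_iff)
  have "proper K (\<lambda>_. M) (\<lambda>_. N) (\<lambda>_. d) \<Longrightarrow>
      num_vars K (\<lambda>_. M) (\<lambda>_. N) (\<lambda>_. d) \<ge> int (num_eqs K (\<lambda>_. d))"
    using assms(5) by (intro num_eqs_le_num_vars_if_proper) auto
  moreover have "proper K (\<lambda>_. M) (\<lambda>_. N) (\<lambda>_. d)"
    if "int M + int N - (int K + 1) * int d \<ge> 0"
  proof (rule proper_symmetric_if)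
    have "int ((K - 1) * d) \<le> int ((M - d) + (N - d))"
      using that assms(1,5) by (simp add: of_nat_diff algebra_simps)
    then show "(K - 1) * d \<le> (M - d) + (N - d)"
      by (simp only: of_nat_le_iff)
  qed
  ultimately show ?thesis
    using counts_iff by blast
qed

end
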